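(* Let $N\ge1$, $\sigma_0>0$, $p_A\in(0,1)$, $a\ge0$. If $0<\sigma_1<\sigma_0$ and $\xi_>(a,\sigma_1)\le\tfrac12$, then $a\le\sigma_0\Phi^{-1}(p_A)$. If $\sigma_1>\sigma_0$ and $\xi_<(a,\sigma_1)\le\tfrac12$, then $a\le\sigma_0\Phi^{-1}(p_A)$. (Here $\sigma_0\Phi^{-1}(p_A)$ is the constant-$\sigma_0$ certified radius $\frac{\sigma_0}{2}(\Phi^{-1}(p_A)-\Phi^{-1}(1-p_A))$ of Cohen et al.)
   Context: $\Phi^{-1}$ is the quantile function of the standard normal distribution. $\chi^2_N(\lambda,x)=\mathbb{P}(\|Z+\mu\|^2\le x)$ for $Z\sim\mathcal{N}(0,I_N)$, $\|\mu\|^2=\lambda\ge 0$ (noncentral chi-squared cdf), and $\chi^2_{N,qf}(\lambda,p)=\inf\{x:\chi^2_N(\lambda,x)\ge p\}$ for $p\in(0,1)$. Fix $N$, $\sigma_0>0$, $p_A\in(0,1)$. For $a\ge0$ and $0<\sigma_1<\sigma_0$ define $$\xi_>(a,\sigma_1)=\chi^2_N\!\left(\frac{\sigma_1^2a^2}{(\sigma_0^2-\sigma_1^2)^2},\ \frac{\sigma_0^2}{\sigma_1^2}\chi^2_{N,qf}\!\left(\frac{\sigma_0^2a^2}{(\sigma_0^2-\sigma_1^2)^2},1-p_A\right)\right),$$ and for $\sigma_1>\sigma_0$ define $$\xi_<(a,\sigma_1)=1-\chi^2_N\!\left(\frac{\sigma_1^2a^2}{(\sigma_1^2-\sigma_0^2)^2},\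 \frac{\sigma_0^2}{\sigma_1^2}\chi^2_{N,qf}\!\left(\frac{\sigma_0^2a^2}{(\sigma_1^2-\sigma_0^2)^2},p_A\right)\right).$$ These equal the maximal probability $\mathbb{P}(f(Y_1)=B)$, $Y_1\sim\mathcal N(x_1,\sigma_1^2 I_N)$, over binary classifiers $f$ with $\mathbb{P}(f(Y_0)=B)\le 1-p_A$, $Y_0\sim\mathcal N(x_0,\sigma_0^2I_N)$, where $a=\|x_1-x_0\|$. *)

theory Defs
  imports "HOL-Probability.Probability"
begin

definition Phi :: "real \<Rightarrow> real" where
  "Phi x = measure (density lborel (\<lambda>t. ennreal (std_normal_density t))) {..x}"

definition Phi_inv :: "real \<Rightarrow> real" where
  "Phi_inv p = Inf {x. Phi x \<ge> p}"

definition std_gauss :: "(real ^ 'n) measure" where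
  "std_gauss = density lborel
     (\<lambda>z. ennreal ((2 * pi) powr (- real CARD('n) / 2) * exp (- (norm z)\<^sup>2 / 2)))"

(* A fixed vector mu with norm mu ^ 2 = lam (for lam >= 0); the cdf does not
   depend on the choice by rotation invariance. *)
definition ncvec :: "real \<Rightarrow> real ^ 'n" where
  "ncvec lam = sqrt lam *\<^sub>R axis (SOME i. True) 1"

definition nchi2_cdf :: "'n::finite itself \<Rightarrow> real \<Rightarrow> real \<Rightarrow> real" where
  "nchi2_cdf _ lam x =
     measure (std_gauss :: (real ^ 'n) measure)
       {z. (norm (z + (ncvec lam :: real ^ 'n)))\<^sup>2 \<le> x}"

definition nchi2_qf :: "'n::finite itself \<Rightarrow> real \<Rightarrow> real \<Rightarrow> real" where
  "nchi2_qf N lam p = Inf {x. nchi2_cdf N lam x \<ge> p}"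

definition xi_gt :: "'n::finite itself \<Rightarrow> real \<Rightarrow> real \<Rightarrow> real \<Rightarrow> real \<Rightarrow> real" where
  "xi_gt N sigma0 pA a sigma1 =
     nchi2_cdf N (sigma1\<^sup>2 * a\<^sup>2 / (sigma0\<^sup>2 - sigma1\<^sup>2)\<^sup>2)
       (sigma0\<^sup>2 / sigma1\<^sup>2 * nchi2_qf N (sigma0\<^sup>2 * a\<^sup>2 / (sigma0\<^sup>2 - sigma1\<^sup>2)\<^sup>2) (1 - pA))"

definition xi_lt :: "'n::finite itself \<Rightarrow> real \<Rightarrow> real \<Rightarrow> real \<Rightarrow> real \<Rightarrow> real" where
  "xi_lt N sigma0 pA a sigma1 =
     1 - nchi2_cdf N (sigma1\<^sup>2 * a\<^sup>2 / (sigma1\<^sup>2 - sigma0\<^sup>2)\<^sup>2)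
       (sigma0\<^sup>2 / sigma1\<^sup>2 * nchi2_qf N (sigma0\<^sup>2 * a\<^sup>2 / (sigma1\<^sup>2 - sigma0\<^sup>2)\<^sup>2) pA)"

end

theory Submission
  imports Defs
begin

text \<open>Rescale space by \<open>\<sigma>\<^sub>0\<close>, so that \<open>Y\<^sub>0\<close> becomes a standard Gaussian \<open>w\<close> and \<open>Y\<^sub>1\<close> becomes
  \<open>(\<mu> b + \<sigma>\<^sub>1 z) / \<sigma>\<^sub>0\<close> with \<open>z\<close> standard Gaussian, \<open>b\<close> a unit vector and \<open>\<mu> = \<plusminus>a\<close>.
  Completing the square, the likelihood ratio of \<open>Y\<^sub>1\<close> against \<open>Y\<^sub>0\<close> is a monotone function of
  \<open>\<parallel>w + r b\<parallel>\<^sup>2\<close>, where \<open>r (\<sigma>\<^sub>1\<^sup>2 - \<sigma>\<^sub>0\<^sup>2) = \<sigma>\<^sub>0 \<mu>\<close>: decreasing if \<open>\<sigma>\<^sub>1 < \<sigma>\<^sub>0\<close>, increasing if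
  \<open>\<sigma>\<^sub>1 > \<sigma>\<^sub>0\<close>. By the Neyman--Pearson lemma the ball around \<open>-r b\<close> (respectively its complement)
  whose \<open>Y\<^sub>0\<close>-mass is the \<open>\<chi>\<^sup>2\<close>-quantile in the definition of \<open>\<xi>\<close> has larger \<open>Y\<^sub>1\<close>-mass than the
  half-space \<open>w \<bullet> b < -\<Phi>\<^sup>-\<^sup>1(p\<^sub>A)\<close> (respectively \<open>w \<bullet> b > \<Phi>\<^sup>-\<^sup>1(p\<^sub>A)\<close>), whose \<open>Y\<^sub>0\<close>-mass is at most
  \<open>1 - p\<^sub>A\<close>. The former \<open>Y\<^sub>1\<close>-mass is \<open>\<xi>\<close>, the latter is \<open>\<Phi>((a - \<sigma>\<^sub>0 \<Phi>\<^sup>-\<^sup>1(p\<^sub>A)) / \<sigma>\<^sub>1)\<close>, which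
  exceeds \<open>1/2\<close> as soon as \<open>a > \<sigma>\<^sub>0 \<Phi>\<^sup>-\<^sup>1(p\<^sub>A)\<close>.\<close>

section \<open>The standard normal distribution\<close>

abbreviation std_normal_measure :: "real measure" where
  "std_normal_measure \<equiv> density lborel (\<lambda>t. ennreal (std_normal_density t))"

lemma prob_space_std_normal_measure: "prob_space std_normal_measure"
  using prob_space_normal_density[of 1 0] by simp

lemma real_distribution_std_normal_measure: "real_distribution std_normal_measure"
  using prob_space_std_normal_measure by (simp add: real_distribution_def real_distribution_axioms_def)

lemma Phi_eq_cdf: "Phi = cdf std_normal_measure"
  by (simp add: fun_eq_iff Phi_def cdf_def)

lemma distr_std_normal_measure_uminus: "distr std_normal_measure borel uminus = std_normal_measure"
proof -
  have "std_normal_measure = density lborel (\<lambda>t. ennreal (std_normal_density (- t)))"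
    by (simp add: std_normal_density_def)
  also have "distr \<dots> borel uminus = density (distr lborel borel uminus) (\<lambda>t. ennreal (std_normal_density t))"
    by (subst density_distr) auto
  finally show ?thesis by (simp add: lborel_distr_uminus)
qed

lemma measure_std_normal_vimage_uminus:
  assumes [measurable]: "B \<in> sets borel"
  shows "measure std_normal_measure (uminus -` B) = measure std_normal_measure B"
proof -
  have "measure std_normal_measure B = measure (distr std_normal_measure borel uminus) B"
    by (simp add: distr_std_normal_measure_uminus)
  then show ?thesis by (simp add: measure_distr)
qed

lemma measure_std_normal_singleton: "measure std_normal_measure {x} = 0"
proof -
  have "AE t in lborel. ennreal (std_normal_density t) * indicator {x} t = 0"
    using AE_lborel_singleton[of x] by (rule eventually_mono) auto
  then show ?thesis
    by (simp add: measure_def emeasure_density nn_integral_0_iff_AE)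
qed

lemma measure_std_normal_interval_pos:
  assumes "0 < y" shows "measure std_normal_measure {0..<y} > 0"
proof -
  interpret prob_space std_normal_measure by (rule prob_space_std_normal_measure)
  have "emeasure std_normal_measure {0..<y} \<noteq> 0"
  proof
    assume "emeasure std_normal_measure {0..<y} = 0"
    then have "AE t in lborel. ennreal (std_normal_density t) * indicator {0..<y} t = 0"
      by (simp add: emeasure_density nn_integral_0_iff_AE)
    then have "AE t in lborel. t \<notin> {0..<y}"
      using normal_density_pos[of 1 0]
      by (auto elim!: eventually_mono split: split_indicator) (metis order_less_irrefl)
    then have "emeasure lborel {0..<y} = 0"
      by (subst (asm) AE_iff_measurable[of "{0..<y}"]) auto
    with assms show False by simp
  qed
  then have "measure std_normal_measure {0..<y} \<noteq> 0"
    by (simp add: emeasure_eq_measure)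
  then show ?thesis using measure_nonneg[of std_normal_measure "{0..<y}"] by linarith
qed

lemma measure_std_normal_lessThan_0: "measure std_normal_measure {..<0} = 1/2"
proof -
  interpret prob_space std_normal_measure by (rule prob_space_std_normal_measure)
  have "measure std_normal_measure {..<0} = measure std_normal_measure {0<..}"
  proof -
    have "uminus -` {..<0} = {0::real<..}" by auto
    then show ?thesis using measure_std_normal_vimage_uminus[of "{..<0}"] by simp
  qed
  also have "\<dots> = 1 - measure std_normal_measure {..0}"
    using prob_compl[of "{..0}"] by (simp add: Compl_eq_Diff_UNIV[symmetric] Compl_atMost)
  also have "measure std_normal_measure {..0} = measure std_normal_measure {..<0}"
    using finite_measure_Union[of "{..<0}" "{0}"] measure_std_normal_singleton[of 0]
    by (simp add: ivl_disj_un_singleton(2)[symmetric])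
  finally show ?thesis by simp
qed

lemma measure_std_normal_lessThan_gt_half:
  assumes "0 < y" shows "measure std_normal_measure {..<y} > 1/2"
proof -
  interpret prob_space std_normal_measure by (rule prob_space_std_normal_measure)
  have "measure std_normal_measure {..<y} = measure std_normal_measure {..<0} + measure std_normal_measure {0..<y}"
  proof -
    have u: "{..<y} = {..<0} \<union> {0..<y}" using assms by auto
    show ?thesis unfolding u by (rule finite_measure_Union) auto
  qed
  then show ?thesis
    using measure_std_normal_lessThan_0 measure_std_normal_interval_pos[OF assms] by simp
qed

lemma measure_std_normal_greaterThan_gt_half:
  assumes "y < 0" shows "measure std_normal_measure {y<..} > 1/2"
proof -
  have "uminus -` {..< -y} = {y<..}" by auto
  then have "measure std_normal_measure {y<..} = measure std_normal_measure {..< -y}"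
    using measure_std_normal_vimage_uminus[of "{..< -y}"] by simp
  then show ?thesis using measure_std_normal_lessThan_gt_half[of "-y"] assms by simp
qed

lemma (in real_distribution)
  assumes "0 < p" "p < 1"
  defines "q \<equiv> Inf {x. cdf M x \<ge> p}"
  shows cdf_quantile_ge: "cdf M q \<ge> p"
    and cdf_quantile_le_if_isCont: "isCont (cdf M) q \<Longrightarrow> cdf M q \<le> p"
proof -
  define S where "S = {x. cdf M x \<ge> p}"
  have "eventually (\<lambda>x. cdf M x > p) at_top"
    using cdf_lim_at_top_prob assms(2) by (simp add: order_tendsto_iff)
  then obtain x0 where "cdf M x0 > p" by (auto simp: eventually_at_top_linorder)
  then have S_ne: "S \<noteq> {}" unfolding S_def by (blast intro: less_imp_le)
  have "eventually (\<lambda>x. cdf M x < p) at_bot"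
    using cdf_lim_at_bot assms(1) by (simp add: order_tendsto_iff)
  then obtain L where L: "\<And>x. x \<le> L \<Longrightarrow> cdf M x < p" by (auto simp: eventually_at_bot_linorder)
  have "bdd_below S"
    unfolding S_def bdd_below_def by (metis L linorder_not_le mem_Collect_eq less_imp_le)
  then have below: "cdf M x < p" if "x < q" for x
    using that cInf_lower[of x S] by (force simp: q_def S_def)
  have above: "cdf M x \<ge> p" if "x > q" for x
  proof -
    have "Inf S < x" using that by (simp add: q_def S_def)
    then obtain s where "s \<in> S" "s < x" using cInf_lessD[OF S_ne] by blast
    then show ?thesis using cdf_nondecreasing[of s x] by (simp add: S_def)
  qed
  show "cdf M q \<ge> p"
  proof (rule tendsto_lowerbound)
    show "(cdf M \<longlongrightarrow> cdf M q) (at_right q)"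
      using cdf_is_right_cont[of q] by (simp add: continuous_within)
    show "\<forall>\<^sub>F x in at_right q. p \<le> cdf M x"
      using above by (auto simp: eventually_at_right_less eventually_at_filter)
  qed simp
  show "cdf M q \<le> p" if "isCont (cdf M) q"
  proof (rule tendsto_upperbound)
    show "(cdf M \<longlongrightarrow> cdf M q) (at_left q)"
      using that by (simp add: filterlim_at_split isCont_def)
    show "\<forall>\<^sub>F x in at_left q. cdf M x \<le> p"
      using below by (auto simp: eventually_at_filter less_imp_le)
  qed simp
qed

lemma measure_std_normal_greaterThan_Phi_inv:
  assumes "0 < p" "p < 1"
  shows "measure std_normal_measure {Phi_inv p<..} \<le> 1 - p"
proof -
  interpret real_distribution std_normal_measure by (rule real_distribution_std_normal_measure)
  have "cdf std_normal_measure (Phi_inv p) \<ge> p"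
    using cdf_quantile_ge[OF assms] by (simp add: Phi_inv_def Phi_eq_cdf)
  moreover have "measure std_normal_measure {Phi_inv p<..} = 1 - measure std_normal_measure {..Phi_inv p}"
    using prob_compl[of "{..Phi_inv p}"] by (simp add: Compl_eq_Diff_UNIV[symmetric] Compl_atMost)
  ultimately show ?thesis by (simp add: cdf_def)
qed

lemma measure_std_normal_lessThan_minus_Phi_inv:
  assumes "0 < p" "p < 1"
  shows "measure std_normal_measure {..< - Phi_inv p} \<le> 1 - p"
proof -
  have "uminus -` {..< - Phi_inv p} = {Phi_inv p<..}" by auto
  then show ?thesis
    using measure_std_normal_vimage_uminus[of "{..< - Phi_inv p}"]
      measure_std_normal_greaterThan_Phi_inv[OF assms] by simp
qed

section \<open>The standard Gaussian measure on \<open>real ^ 'n\<close>\<close>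

definition std_gauss_density :: "real ^ 'n \<Rightarrow> real" where
  "std_gauss_density z = (2 * pi) powr (- real CARD('n) / 2) * exp (- (norm z)\<^sup>2 / 2)"

lemma std_gauss_eq_density:
  "(std_gauss :: (real ^ 'n) measure) = density lborel (\<lambda>z. ennreal (std_gauss_density z))"
  by (simp add: std_gauss_def std_gauss_density_def)

lemma std_gauss_density_nonneg: "0 \<le> std_gauss_density z"
  by (simp add: std_gauss_density_def)

lemma borel_measurable_std_gauss_density [measurable]: "std_gauss_density \<in> borel_measurable borel"
  unfolding std_gauss_density_def[abs_def] by measurable

lemma space_std_gauss [simp]: "space std_gauss = UNIV"
  by (simp add: std_gauss_def)

lemma sets_std_gauss [simp, measurable_cong]: "sets std_gauss = sets borel"
  by (simp add: std_gauss_def)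

lemma inner_sum_Basis_scaleR:
  assumes "b \<in> (Basis :: 'a::euclidean_space set)"
  shows "(\<Sum>b'\<in>Basis. f b' *\<^sub>R b') \<bullet> b = f b"
  using assms by (simp add: inner_sum_left inner_Basis if_distrib cong: if_cong)

lemma norm_sum_Basis_scaleR_squared:
  "(norm (\<Sum>b\<in>Basis. f b *\<^sub>R b :: 'a::euclidean_space))\<^sup>2 = (\<Sum>b\<in>Basis. (f b)\<^sup>2)"
  unfolding power2_norm_eq_inner
  by (subst euclidean_inner) (simp add: inner_sum_Basis_scaleR power2_eq_square)

lemma std_gauss_density_sum_Basis:
  "std_gauss_density (\<Sum>b\<in>Basis. f b *\<^sub>R b :: real ^ 'n) = (\<Prod>b\<in>Basis. std_normal_density (f b))"
proof -
  have "sqrt (2 * pi) ^ CARD('n) = ((2 * pi) powr (1/2)) powr real CARD('n)"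
    by (simp add: powr_half_sqrt powr_realpow)
  then have "(1 / sqrt (2 * pi)) ^ CARD('n) = (2 * pi) powr (- real CARD('n) / 2)"
    by (simp add: power_one_over powr_powr powr_minus_divide)
  moreover have "(\<Prod>b\<in>(Basis :: (real ^ 'n) set). exp (- (f b)\<^sup>2 / 2))
      = exp (- (norm (\<Sum>b\<in>Basis. f b *\<^sub>R b :: real ^ 'n))\<^sup>2 / 2)"
    by (simp add: exp_sum[symmetric] norm_sum_Basis_scaleR_squared sum_negf sum_divide_distrib)
  moreover have "(\<Prod>b\<in>(Basis :: (real ^ 'n) set). std_normal_density (f b))
      = (\<Prod>b\<in>(Basis :: (real ^ 'n) set). 1 / sqrt (2 * pi))
        * (\<Prod>b\<in>(Basis :: (real ^ 'n) set). exp (- (f b)\<^sup>2 / 2))"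
    by (subst prod.distrib[symmetric], rule prod.cong) (simp_all add: std_normal_density_def)
  ultimately show ?thesis
    by (simp add: std_gauss_density_def)
qed

lemma nn_integral_std_normal_density: "(\<integral>\<^sup>+x. ennreal (std_normal_density x) \<partial>lborel) = 1"
  using prob_space.emeasure_space_1[OF prob_space_std_normal_measure] by (simp add: emeasure_density)

lemma emeasure_std_gauss_inner_Basis:
  assumes b0: "b0 \<in> (Basis :: (real ^ 'n) set)" and [measurable]: "B \<in> sets borel"
  shows "emeasure (std_gauss :: (real ^ 'n) measure) {z. z \<bullet> b0 \<in> B} = emeasure std_normal_measure B"
proof -
  interpret product_sigma_finite "\<lambda>_::real ^ 'n. lborel :: real measure"
    by (simp add: product_sigma_finite_def sigma_finite_lborel)
  have factor: "ennreal (std_gauss_density (\<Sum>b\<in>Basis. f b *\<^sub>R b :: real ^ 'n))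
      * indicator {z::real ^ 'n. z \<bullet> b0 \<in> B} (\<Sum>b\<in>Basis. f b *\<^sub>R b)
    = (\<Prod>b\<in>(Basis :: (real ^ 'n) set).
        ennreal (std_normal_density (f b)) * (if b = b0 then indicator B (f b) else 1))" for f
  proof -
    have "(\<Prod>b\<in>(Basis :: (real ^ 'n) set).
        ennreal (std_normal_density (f b)) * (if b = b0 then indicator B (f b) else 1))
      = (\<Prod>b\<in>(Basis :: (real ^ 'n) set). ennreal (std_normal_density (f b)))
        * (\<Prod>b\<in>(Basis :: (real ^ 'n) set). if b = b0 then indicator B (f b) else 1)"
      by (rule prod.distrib)
    also have "\<dots> = ennreal (std_gauss_density (\<Sum>b\<in>Basis. f b *\<^sub>R b :: real ^ 'n)) * indicator B (f b0)"
      using b0 by (simp add: std_gauss_density_sum_Basis prod_ennreal)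
    finally show ?thesis
      using b0 by (simp add: inner_sum_Basis_scaleR indicator_def)
  qed
  have "emeasure (std_gauss :: (real ^ 'n) measure) {z. z \<bullet> b0 \<in> B}
      = (\<integral>\<^sup>+z. ennreal (std_gauss_density z) * indicator {z::real ^ 'n. z \<bullet> b0 \<in> B} z \<partial>lborel)"
    by (simp add: std_gauss_eq_density emeasure_density)
  also have "\<dots> = (\<integral>\<^sup>+f. ennreal (std_gauss_density (\<Sum>b\<in>Basis. f b *\<^sub>R b :: real ^ 'n))
        * indicator {z::real ^ 'n. z \<bullet> b0 \<in> B} (\<Sum>b\<in>Basis. f b *\<^sub>R b)
      \<partial>(\<Pi>\<^sub>M b\<in>(Basis :: (real ^ 'n) set). lborel))"
    by (subst lborel_eq, subst nn_integral_distr) auto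
  also have "\<dots> = (\<integral>\<^sup>+f. (\<Prod>b\<in>(Basis :: (real ^ 'n) set).
        ennreal (std_normal_density (f b)) * (if b = b0 then indicator B (f b) else 1))
      \<partial>(\<Pi>\<^sub>M b\<in>(Basis :: (real ^ 'n) set). lborel))"
    by (simp only: factor)
  also have "\<dots> = (\<Prod>b\<in>(Basis :: (real ^ 'n) set).
      \<integral>\<^sup>+x. ennreal (std_normal_density x) * (if b = b0 then indicator B x else 1) \<partial>lborel)"
    by (rule product_nn_integral_prod) auto
  also have "\<dots> = (\<Prod>b\<in>(Basis :: (real ^ 'n) set).
      if b = b0 then \<integral>\<^sup>+x. ennreal (std_normal_density x) * indicator B x \<partial>lborel else 1)"
    by (rule prod.cong) (auto simp: nn_integral_std_normal_density)
  also have "\<dots> = (\<integral>\<^sup>+x. ennreal (std_normal_density x) * indicator B x \<partial>lborel)"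
    using b0 by simp
  finally show ?thesis by (simp add: emeasure_density)
qed

lemma measure_std_gauss_inner_Basis:
  assumes "b0 \<in> (Basis :: (real ^ 'n) set)" "B \<in> sets borel"
  shows "measure (std_gauss :: (real ^ 'n) measure) {z. z \<bullet> b0 \<in> B} = measure std_normal_measure B"
  using emeasure_std_gauss_inner_Basis[OF assms] by (simp add: measure_def)

lemma prob_space_std_gauss: "prob_space (std_gauss :: (real ^ 'n) measure)"
proof
  have "emeasure (std_gauss :: (real ^ 'n) measure) {z. z \<bullet> axis (SOME i. True) 1 \<in> UNIV}
      = emeasure std_normal_measure UNIV"
    by (rule emeasure_std_gauss_inner_Basis) auto
  then show "emeasure (std_gauss :: (real ^ 'n) measure) (space std_gauss) = 1"
    using prob_space.emeasure_space_1[OF prob_space_std_normal_measure] by simp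
qed

lemma emeasure_std_gauss_UNIV [simp]: "emeasure (std_gauss :: (real ^ 'n) measure) UNIV = 1"
  using prob_space.emeasure_space_1[OF prob_space_std_gauss] by simp

lemma integrable_std_gauss_density: "integrable lborel (std_gauss_density :: real ^ 'n \<Rightarrow> real)"
proof (rule integrableI_nonneg)
  have "(\<integral>\<^sup>+x. ennreal (std_gauss_density (x :: real ^ 'n)) \<partial>lborel)
      = emeasure (std_gauss :: (real ^ 'n) measure) UNIV"
    by (simp add: std_gauss_eq_density emeasure_density)
  then show "(\<integral>\<^sup>+x. ennreal (std_gauss_density (x :: real ^ 'n)) \<partial>lborel) < \<infinity>"
    by simp
qed (simp_all add: std_gauss_density_nonneg)

section \<open>The Neyman--Pearson lemma\<close>

lemma integrable_indicator_mult:
  fixes f :: "'a::euclidean_space \<Rightarrow> real"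
  shows "A \<in> sets borel \<Longrightarrow> integrable lborel f \<Longrightarrow> integrable lborel (\<lambda>x. indicator A x * f x)"
  using integrable_real_mult_indicator[of A lborel f] by (simp add: mult.commute)

lemma measure_density_eq_integral:
  fixes f :: "'a::euclidean_space \<Rightarrow> real"
  assumes [measurable]: "f \<in> borel_measurable borel" "A \<in> sets borel"
    and nonneg: "\<And>x. 0 \<le> f x" and "integrable lborel f"
  shows "measure (density lborel (\<lambda>x. ennreal (f x))) A = (\<integral>x. indicator A x * f x \<partial>lborel)"
proof -
  have "integrable lborel (\<lambda>x. indicator A x * f x)"
    using assms by (simp add: integrable_indicator_mult)
  then have "(\<integral>\<^sup>+x. ennreal (f x) * indicator A x \<partial>lborel) = ennreal (\<integral>x. indicator A x * f x \<partial>lborel)"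
    using nonneg by (subst nn_integral_eq_integral[symmetric]) (auto intro!: nn_integral_cong split: split_indicator)
  then show ?thesis
    using nonneg by (simp add: measure_def emeasure_density integral_nonneg_AE)
qed

lemma neyman_pearson_density:
  fixes f0 f1 :: "'a::euclidean_space \<Rightarrow> real"
  assumes [measurable]: "f0 \<in> borel_measurable borel" "f1 \<in> borel_measurable borel"
    "S \<in> sets borel" "H \<in> sets borel"
    and nonneg0: "\<And>x. 0 \<le> f0 x" and nonneg1: "\<And>x. 0 \<le> f1 x"
    and int0: "integrable lborel f0" and int1: "integrable lborel f1"
    and "0 \<le> t"
    and inside: "\<And>x. x \<in> S \<Longrightarrow> t * f0 x \<le> f1 x"
    and outside: "\<And>x. x \<notin> S \<Longrightarrow> f1 x \<le> t * f0 x"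
    and mass0: "measure (density lborel (\<lambda>x. ennreal (f0 x))) H \<le> measure (density lborel (\<lambda>x. ennreal (f0 x))) S"
  shows "measure (density lborel (\<lambda>x. ennreal (f1 x))) H \<le> measure (density lborel (\<lambda>x. ennreal (f1 x))) S"
proof -
  note integrable_parts = integrable_indicator_mult[OF _ int0] integrable_indicator_mult[OF _ int1]
  have "(\<integral>x. indicator H x * f1 x + t * (indicator S x * f0 x) \<partial>lborel)
      \<le> (\<integral>x. indicator S x * f1 x + t * (indicator H x * f0 x) \<partial>lborel)"
    using inside outside integrable_parts
    by (intro integral_mono) (auto split: split_indicator)
  then have "(\<integral>x. indicator H x * f1 x \<partial>lborel) + t * (\<integral>x. indicator S x * f0 x \<partial>lborel)
      \<le> (\<integral>x. indicator S x * f1 x \<partial>lborel) + t * (\<integral>x. indicator H x * f0 x \<partial>lborel)"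
    using integrable_parts by simp
  moreover have "(\<integral>x. indicator H x * f0 x \<partial>lborel) \<le> (\<integral>x. indicator S x * f0 x \<partial>lborel)"
    using mass0 by (simp add: measure_density_eq_integral nonneg0 int0)
  ultimately have "(\<integral>x. indicator H x * f1 x \<partial>lborel) \<le> (\<integral>x. indicator S x * f1 x \<partial>lborel)"
    using \<open>0 \<le> t\<close> by (smt (verit) mult_left_mono)
  then show ?thesis by (simp add: measure_density_eq_integral nonneg1 int1)
qed

section \<open>Likelihood ratio of a rescaled and shifted Gaussian\<close>

definition affine_gauss_density :: "real \<Rightarrow> real \<Rightarrow> real ^ 'n \<Rightarrow> real ^ 'n \<Rightarrow> real" where
  "affine_gauss_density sigma0 sigma1 m w =
     (sigma0 / sigma1) ^ CARD('n) * std_gauss_density ((1 / sigma1) *\<^sub>R (sigma0 *\<^sub>R w - m))"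

lemma affine_gauss_density_nonneg: "0 < sigma0 \<Longrightarrow> 0 < sigma1 \<Longrightarrow> 0 \<le> affine_gauss_density sigma0 sigma1 m w"
  by (simp add: affine_gauss_density_def std_gauss_density_nonneg)

lemma borel_measurable_affine_gauss_density [measurable]:
  "affine_gauss_density sigma0 sigma1 m \<in> borel_measurable borel"
  unfolding affine_gauss_density_def[abs_def] by measurable

lemma emeasure_std_gauss_affine_preimage:
  fixes m :: "real ^ 'n"
  assumes "0 < sigma0" "0 < sigma1" and [measurable]: "A \<in> sets borel"
  shows "emeasure std_gauss {z. (1 / sigma0) *\<^sub>R (m + sigma1 *\<^sub>R z) \<in> A}
       = emeasure (density lborel (\<lambda>w. ennreal (affine_gauss_density sigma0 sigma1 m w))) A"
proof -
  define T where "T w = (- (1 / sigma1)) *\<^sub>R m + (sigma0 / sigma1) *\<^sub>R w" for w :: "real ^ 'n"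
  have T_eq: "T w = (1 / sigma1) *\<^sub>R (sigma0 *\<^sub>R w - m)" for w
    by (simp add: T_def scaleR_diff_right algebra_simps)
  have T_inverse: "(1 / sigma0) *\<^sub>R (m + sigma1 *\<^sub>R T w) = w" for w
    using assms(1,2) by (simp add: T_eq scaleR_diff_right)
  have "emeasure std_gauss {z. (1 / sigma0) *\<^sub>R (m + sigma1 *\<^sub>R z) \<in> A}
      = (\<integral>\<^sup>+z. ennreal (std_gauss_density z) * indicator {z. (1 / sigma0) *\<^sub>R (m + sigma1 *\<^sub>R z) \<in> A} z \<partial>lborel)"
    by (simp add: std_gauss_eq_density emeasure_density)
  also have "\<dots> = (\<integral>\<^sup>+w. ennreal (\<bar>sigma0 / sigma1\<bar> ^ DIM(real ^ 'n)) *
      (ennreal (std_gauss_density (T w)) * indicator {z. (1 / sigma0) *\<^sub>R (m + sigma1 *\<^sub>R z) \<in> A} (T w)) \<partial>lborel)"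
    unfolding T_def using assms(1,2)
    by (subst lborel_affine[of "sigma0 / sigma1" "- (1 / sigma1) *\<^sub>R m"])
      (simp_all add: nn_integral_density nn_integral_distr)
  also have "\<dots> = (\<integral>\<^sup>+w. ennreal (affine_gauss_density sigma0 sigma1 m w) * indicator A w \<partial>lborel)"
    using assms(1,2)
    by (intro nn_integral_cong)
      (simp add: T_inverse T_eq affine_gauss_density_def ennreal_mult std_gauss_density_nonneg
        mult.assoc indicator_def)
  finally show ?thesis by (simp add: emeasure_density)
qed

lemma affine_gauss_density_ratio:
  fixes w b :: "real ^ 'n"
  assumes b: "norm b = 1" and "0 < sigma1" and shift: "r * (sigma1\<^sup>2 - sigma0\<^sup>2) = sigma0 * mu"
  shows "affine_gauss_density sigma0 sigma1 (mu *\<^sub>R b) w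
    = (sigma0 / sigma1) ^ CARD('n)
      * exp (((sigma1\<^sup>2 - sigma0\<^sup>2) * (norm (w + r *\<^sub>R b))\<^sup>2 - mu\<^sup>2 - (sigma1\<^sup>2 - sigma0\<^sup>2) * r\<^sup>2) / (2 * sigma1\<^sup>2))
      * std_gauss_density w"
proof -
  have norm_combination: "(norm (c *\<^sub>R w + d *\<^sub>R b))\<^sup>2 = c\<^sup>2 * (norm w)\<^sup>2 + 2 * c * d * (w \<bullet> b) + d\<^sup>2" for c d
    using b unfolding power2_norm_eq_inner
    by (simp add: norm_eq_1 inner_add_left inner_add_right inner_commute power2_eq_square algebra_simps)
  have "(1 / sigma1) *\<^sub>R (sigma0 *\<^sub>R w - mu *\<^sub>R b) = (sigma0 / sigma1) *\<^sub>R w + (- mu / sigma1) *\<^sub>R b"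
    by (simp add: algebra_simps scaleR_diff_right divide_inverse)
  then have "(norm ((1 / sigma1) *\<^sub>R (sigma0 *\<^sub>R w - mu *\<^sub>R b)))\<^sup>2
      = (sigma0\<^sup>2 * (norm w)\<^sup>2 - 2 * (sigma0 * mu) * (w \<bullet> b) + mu\<^sup>2) / sigma1\<^sup>2"
    using norm_combination[of "sigma0 / sigma1" "- mu / sigma1"] \<open>0 < sigma1\<close>
    by (simp add: field_simps power2_eq_square)
  then have shifted: "(norm ((1 / sigma1) *\<^sub>R (sigma0 *\<^sub>R w - mu *\<^sub>R b)))\<^sup>2
      = (sigma0\<^sup>2 * (norm w)\<^sup>2 - 2 * (r * (sigma1\<^sup>2 - sigma0\<^sup>2)) * (w \<bullet> b) + mu\<^sup>2) / sigma1\<^sup>2"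
    unfolding shift .
  have exponent: "- (norm ((1 / sigma1) *\<^sub>R (sigma0 *\<^sub>R w - mu *\<^sub>R b)))\<^sup>2 / 2
    = ((sigma1\<^sup>2 - sigma0\<^sup>2) * (norm (w + r *\<^sub>R b))\<^sup>2 - mu\<^sup>2 - (sigma1\<^sup>2 - sigma0\<^sup>2) * r\<^sup>2) / (2 * sigma1\<^sup>2)
      + - (norm w)\<^sup>2 / 2"
    unfolding shifted norm_combination[of 1 r, simplified] using \<open>0 < sigma1\<close>
    by (simp add: field_simps power2_eq_square)
  show ?thesis
    unfolding affine_gauss_density_def std_gauss_density_def exponent by (simp only: exp_add mult_ac)
qed

lemma integrable_affine_gauss_density:
  assumes "0 < sigma0" "0 < sigma1"
  shows "integrable lborel (affine_gauss_density sigma0 sigma1 (m :: real ^ 'n))"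
proof (rule integrableI_nonneg)
  have "(\<integral>\<^sup>+w. ennreal (affine_gauss_density sigma0 sigma1 m w) \<partial>lborel)
      = emeasure (std_gauss :: (real ^ 'n) measure) {z. (1 / sigma0) *\<^sub>R (m + sigma1 *\<^sub>R z) \<in> UNIV}"
    using emeasure_std_gauss_affine_preimage[OF assms, of UNIV m] by (simp add: emeasure_density)
  then show "(\<integral>\<^sup>+w. ennreal (affine_gauss_density sigma0 sigma1 m w) \<partial>lborel) < \<infinity>"
    by simp
qed (use assms in \<open>simp_all add: affine_gauss_density_nonneg\<close>)

lemma std_gauss_affine_neyman_pearson:
  fixes b :: "real ^ 'n" and S H :: "(real ^ 'n) set"
  assumes "0 < sigma0" "0 < sigma1" and b: "norm b = 1"
    and shift: "r * (sigma1\<^sup>2 - sigma0\<^sup>2) = sigma0 * mu"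
    and [measurable]: "S \<in> sets borel" "H \<in> sets borel"
    and inside: "\<And>w. w \<in> S \<Longrightarrow> (sigma1\<^sup>2 - sigma0\<^sup>2) * ((norm (w + r *\<^sub>R b))\<^sup>2 - q) \<ge> 0"
    and outside: "\<And>w. w \<notin> S \<Longrightarrow> (sigma1\<^sup>2 - sigma0\<^sup>2) * ((norm (w + r *\<^sub>R b))\<^sup>2 - q) \<le> 0"
    and mass0: "measure std_gauss H \<le> measure std_gauss S"
  shows "measure std_gauss {z. (1 / sigma0) *\<^sub>R (mu *\<^sub>R b + sigma1 *\<^sub>R z) \<in> H}
       \<le> measure std_gauss {z. (1 / sigma0) *\<^sub>R (mu *\<^sub>R b + sigma1 *\<^sub>R z) \<in> S}"
proof -
  define D where "D = sigma1\<^sup>2 - sigma0\<^sup>2"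
  define C where "C = (sigma0 / sigma1) ^ CARD('n)"
  define level where "level x = exp ((D * x - mu\<^sup>2 - D * r\<^sup>2) / (2 * sigma1\<^sup>2))" for x
  have "0 \<le> C" using assms(1,2) by (simp add: C_def)
  have ratio: "affine_gauss_density sigma0 sigma1 (mu *\<^sub>R b) w
      = C * level ((norm (w + r *\<^sub>R b))\<^sup>2) * std_gauss_density w" for w
    using affine_gauss_density_ratio[OF b assms(2) shift] by (simp add: C_def D_def level_def)
  have level_mono: "level x \<le> level y" if "D * x \<le> D * y" for x y
    using that assms(2) by (simp add: level_def divide_right_mono)
  have above_level: "D * q \<le> D * (norm (w + r *\<^sub>R b))\<^sup>2" if "w \<in> S" for w
    using inside[OF that] by (simp add: D_def right_diff_distrib)
  have ratio_above_threshold: "C * level q * std_gauss_density w \<le> affine_gauss_density sigma0 sigma1 (mu *\<^sub>R b) w"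
    if "w \<in> S" for w
    unfolding ratio
    by (rule mult_right_mono[OF mult_left_mono[OF level_mono[OF above_level[OF that]] \<open>0 \<le> C\<close>] std_gauss_density_nonneg])
  have below_level: "D * (norm (w + r *\<^sub>R b))\<^sup>2 \<le> D * q" if "w \<notin> S" for w
    using outside[OF that] by (simp add: D_def right_diff_distrib)
  have ratio_below_threshold: "affine_gauss_density sigma0 sigma1 (mu *\<^sub>R b) w \<le> C * level q * std_gauss_density w"
    if "w \<notin> S" for w
    unfolding ratio
    by (rule mult_right_mono[OF mult_left_mono[OF level_mono[OF below_level[OF that]] \<open>0 \<le> C\<close>] std_gauss_density_nonneg])
  have "measure (density lborel (\<lambda>w. ennreal (affine_gauss_density sigma0 sigma1 (mu *\<^sub>R b) w))) H
      \<le> measure (density lborel (\<lambda>w. ennreal (affine_gauss_density sigma0 sigma1 (mu *\<^sub>R b) w))) S"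
  proof (rule neyman_pearson_density[OF _ _ _ _ std_gauss_density_nonneg _ integrable_std_gauss_density
        integrable_affine_gauss_density[OF assms(1,2)] _ ratio_above_threshold ratio_below_threshold])
    show "0 \<le> C * level q" using \<open>0 \<le> C\<close> by (simp add: level_def)
    show "measure (density lborel (\<lambda>w. ennreal (std_gauss_density w))) H
        \<le> measure (density lborel (\<lambda>w. ennreal (std_gauss_density w))) S"
      using mass0 by (simp add: std_gauss_eq_density)
  qed (use assms(1,2) in \<open>simp_all add: affine_gauss_density_nonneg\<close>)
  then show ?thesis
    using emeasure_std_gauss_affine_preimage[OF assms(1,2), of _ "mu *\<^sub>R b"] by (simp add: measure_def)
qed

section \<open>Quantiles of the noncentral \<open>\<chi>\<^sup>2\<close> distribution\<close>

definition nchi2_measure :: "'n::finite itself \<Rightarrow> real \<Rightarrow> real measure" where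
  "nchi2_measure N lam = distr (std_gauss :: (real ^ 'n) measure) borel (\<lambda>z. (norm (z + ncvec lam))\<^sup>2)"

lemma real_distribution_nchi2_measure: "real_distribution (nchi2_measure N lam)"
  unfolding nchi2_measure_def
  by (rule prob_space.real_distribution_distr[OF prob_space_std_gauss]) simp

lemma cdf_nchi2_measure: "cdf (nchi2_measure N lam) = nchi2_cdf N lam"
  by (simp add: fun_eq_iff cdf_def nchi2_measure_def nchi2_cdf_def measure_distr vimage_def)

lemma nchi2_cdf_qf_ge:
  assumes "0 < p" "p < 1"
  shows "nchi2_cdf N lam (nchi2_qf N lam p) \<ge> p"
  using real_distribution.cdf_quantile_ge[OF real_distribution_nchi2_measure assms]
  by (simp add: cdf_nchi2_measure nchi2_qf_def)

lemma nchi2_cdf_qf_le: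
  assumes "0 < p" "p < 1"
  shows "nchi2_cdf (N :: 'n::finite itself) lam (nchi2_qf N lam p) \<le> p"
proof -
  interpret real_distribution "nchi2_measure N lam" by (rule real_distribution_nchi2_measure)
  define q where "q = nchi2_qf N lam p"
  have "sphere (- ncvec lam :: real ^ 'n) (sqrt q) \<in> null_sets lborel"
    using negligible_sphere
    by (auto simp: null_sets_completion_iff negligible_iff_null_sets negligible_convex_frontier)
  moreover have "{z::real ^ 'n. (norm (z + ncvec lam))\<^sup>2 = q} \<in> sets lborel"
    by measurable
  moreover have "{z::real ^ 'n. (norm (z + ncvec lam))\<^sup>2 = q} \<subseteq> sphere (- ncvec lam) (sqrt q)"
    by (auto simp: dist_norm norm_minus_commute)
  ultimately have "{z::real ^ 'n. (norm (z + ncvec lam))\<^sup>2 = q} \<in> null_sets lborel"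
    by (rule null_sets_subset)
  then have "{z. (norm (z + ncvec lam))\<^sup>2 = q} \<in> null_sets (std_gauss :: (real ^ 'n) measure)"
    unfolding std_gauss_eq_density
    by (auto simp: null_sets_density_iff dest: AE_not_in elim!: eventually_mono)
  then have "emeasure (std_gauss :: (real ^ 'n) measure) {z. (norm (z + ncvec lam))\<^sup>2 = q} = 0"
    by blast
  then have "measure (nchi2_measure N lam) {q} = 0"
    unfolding nchi2_measure_def by (subst measure_distr) (auto simp: vimage_def measure_def)
  then show ?thesis
    using cdf_quantile_le_if_isCont[OF assms] isCont_cdf
    by (simp add: cdf_nchi2_measure nchi2_qf_def q_def)
qed

section \<open>Balls against half-spaces\<close>

lemma ncvec_square: "0 \<le> r \<Longrightarrow> ncvec (r\<^sup>2) = r *\<^sub>R axis (SOME i. True) 1"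
  by (simp add: ncvec_def)

lemma inner_affine_unit:
  fixes b z :: "real ^ 'n"
  assumes "norm b = 1"
  shows "((1 / sigma0) *\<^sub>R (mu *\<^sub>R b + sigma1 *\<^sub>R z)) \<bullet> b = (mu + sigma1 * (z \<bullet> b)) / sigma0"
  using assms by (simp add: norm_eq_1 inner_add_left divide_inverse algebra_simps)

lemma norm_affine_shift_le_iff:
  fixes b z :: "real ^ 'n"
  assumes "0 < sigma0" "0 < sigma1" and centres: "mu + sigma0 * r0 = sigma1 * r1"
  shows "(norm ((1 / sigma0) *\<^sub>R (mu *\<^sub>R b + sigma1 *\<^sub>R z) + r0 *\<^sub>R b))\<^sup>2 \<le> q
     \<longleftrightarrow> (norm (z + r1 *\<^sub>R b))\<^sup>2 \<le> sigma0\<^sup>2 / sigma1\<^sup>2 * q"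
proof -
  have "mu / sigma0 + r0 = sigma1 / sigma0 * r1"
    using assms(1) centres by (simp add: field_simps)
  then have "(1 / sigma0) *\<^sub>R (mu *\<^sub>R b + sigma1 *\<^sub>R z) + r0 *\<^sub>R b = (sigma1 / sigma0) *\<^sub>R (z + r1 *\<^sub>R b)"
    by (simp add: scaleR_add_right scaleR_add_left flip: scaleR_add_left)
  then have "(norm ((1 / sigma0) *\<^sub>R (mu *\<^sub>R b + sigma1 *\<^sub>R z) + r0 *\<^sub>R b))\<^sup>2
      = (sigma1 / sigma0)\<^sup>2 * (norm (z + r1 *\<^sub>R b))\<^sup>2"
    by (simp only: norm_scaleR power_mult_distrib power2_abs)
  moreover have "X \<le> q \<longleftrightarrow> Y \<le> sigma0\<^sup>2 / sigma1\<^sup>2 * q" if "X = (sigma1 / sigma0)\<^sup>2 * Y" for X Y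
    unfolding that using assms(1,2) by (simp add: field_simps power_divide)
  ultimately show ?thesis by blast
qed

lemma neyman_pearson_ball_halfspace:
  fixes N :: "'n::finite itself"
  assumes "0 < sigma1" "sigma1 < sigma0" "0 \<le> a"
    and "measure std_normal_measure {..<c} \<le> nchi2_cdf N (sigma0\<^sup>2 * a\<^sup>2 / (sigma0\<^sup>2 - sigma1\<^sup>2)\<^sup>2) q"
  shows "measure std_normal_measure {..< (sigma0 * c + a) / sigma1}
    \<le> nchi2_cdf N (sigma1\<^sup>2 * a\<^sup>2 / (sigma0\<^sup>2 - sigma1\<^sup>2)\<^sup>2) (sigma0\<^sup>2 / sigma1\<^sup>2 * q)"
proof -
  define b :: "real ^ 'n" where "b = axis (SOME i. True) 1"
  define D where "D = sigma0\<^sup>2 - sigma1\<^sup>2"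
  define r0 where "r0 = sigma0 * a / D"
  define r1 where "r1 = sigma1 * a / D"
  have "0 < sigma0" "sigma1\<^sup>2 < sigma0\<^sup>2" using assms(1,2) by (auto intro: power_strict_mono)
  then have "0 < D" by (simp add: D_def)
  have b: "norm b = 1" "b \<in> Basis" by (simp_all add: b_def)
  have ncvec0: "ncvec (sigma0\<^sup>2 * a\<^sup>2 / (sigma0\<^sup>2 - sigma1\<^sup>2)\<^sup>2) = r0 *\<^sub>R b"
    using ncvec_square[of r0] \<open>0 < sigma0\<close> \<open>0 < D\<close> assms(3)
    by (simp add: r0_def D_def b_def power_divide power_mult_distrib)
  have ncvec1: "ncvec (sigma1\<^sup>2 * a\<^sup>2 / (sigma0\<^sup>2 - sigma1\<^sup>2)\<^sup>2) = r1 *\<^sub>R b"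
    using ncvec_square[of r1] assms(1,3) \<open>0 < D\<close>
    by (simp add: r1_def D_def b_def power_divide power_mult_distrib)
  have shift: "r0 * (sigma1\<^sup>2 - sigma0\<^sup>2) = sigma0 * - a"
    using \<open>0 < D\<close> by (simp add: r0_def D_def field_simps)
  have centres: "- a + sigma0 * r0 = sigma1 * r1"
    using \<open>0 < D\<close> by (simp add: r0_def r1_def D_def field_simps power2_eq_square)
  define S where "S = {w :: real ^ 'n. (norm (w + r0 *\<^sub>R b))\<^sup>2 \<le> q}"
  define H where "H = {w :: real ^ 'n. w \<bullet> b \<in> {..<c}}"
  have np: "measure std_gauss {z. (1 / sigma0) *\<^sub>R (- a *\<^sub>R b + sigma1 *\<^sub>R z) \<in> H}
      \<le> measure std_gauss {z. (1 / sigma0) *\<^sub>R (- a *\<^sub>R b + sigma1 *\<^sub>R z) \<in> S}"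
  proof (rule std_gauss_affine_neyman_pearson[where q = q, OF \<open>0 < sigma0\<close> assms(1) b(1) shift])
    show "measure std_gauss H \<le> measure std_gauss S"
      using assms(4) measure_std_gauss_inner_Basis[OF b(2), of "{..<c}"]
      by (simp add: S_def H_def nchi2_cdf_def ncvec0)
  qed (use \<open>0 < D\<close> in \<open>auto simp: S_def H_def D_def intro: mult_nonpos_nonpos mult_nonpos_nonneg\<close>)
  have preimage_H: "{z. (1 / sigma0) *\<^sub>R (- a *\<^sub>R b + sigma1 *\<^sub>R z) \<in> H}
      = {z. z \<bullet> b \<in> {..< (sigma0 * c + a) / sigma1}}"
  proof -
    have "(- a + sigma1 * u) / sigma0 < c \<longleftrightarrow> u < (sigma0 * c + a) / sigma1" for u
      using \<open>0 < sigma0\<close> assms(1) by (simp add: field_simps)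
    then show ?thesis by (simp only: H_def mem_Collect_eq lessThan_iff inner_affine_unit[OF b(1)])
  qed
  have preimage_S: "{z. (1 / sigma0) *\<^sub>R (- a *\<^sub>R b + sigma1 *\<^sub>R z) \<in> S}
      = {z. (norm (z + ncvec (sigma1\<^sup>2 * a\<^sup>2 / (sigma0\<^sup>2 - sigma1\<^sup>2)\<^sup>2)))\<^sup>2 \<le> sigma0\<^sup>2 / sigma1\<^sup>2 * q}"
    by (simp only: S_def ncvec1 mem_Collect_eq norm_affine_shift_le_iff[OF \<open>0 < sigma0\<close> assms(1) centres])
  show ?thesis
    using np unfolding preimage_H preimage_S measure_std_gauss_inner_Basis[OF b(2) lessThan_borel]
      nchi2_cdf_def .
qed

lemma neyman_pearson_ball_complement_halfspace:
  fixes N :: "'n::finite itself"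
  assumes "0 < sigma0" "sigma0 < sigma1" "0 \<le> a"
    and "measure std_normal_measure {c<..} \<le> 1 - nchi2_cdf N (sigma0\<^sup>2 * a\<^sup>2 / (sigma1\<^sup>2 - sigma0\<^sup>2)\<^sup>2) q"
  shows "measure std_normal_measure {(sigma0 * c - a) / sigma1 <..}
    \<le> 1 - nchi2_cdf N (sigma1\<^sup>2 * a\<^sup>2 / (sigma1\<^sup>2 - sigma0\<^sup>2)\<^sup>2) (sigma0\<^sup>2 / sigma1\<^sup>2 * q)"
proof -
  interpret prob_space "std_gauss :: (real ^ 'n) measure" by (rule prob_space_std_gauss)
  define b :: "real ^ 'n" where "b = axis (SOME i. True) 1"
  define D where "D = sigma1\<^sup>2 - sigma0\<^sup>2"
  define r0 where "r0 = sigma0 * a / D"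
  define r1 where "r1 = sigma1 * a / D"
  have "0 < sigma1" "sigma0\<^sup>2 < sigma1\<^sup>2" using assms(1,2) by (auto intro: power_strict_mono)
  then have "0 < D" by (simp add: D_def)
  have b: "norm b = 1" "b \<in> Basis" by (simp_all add: b_def)
  have ncvec0: "ncvec (sigma0\<^sup>2 * a\<^sup>2 / (sigma1\<^sup>2 - sigma0\<^sup>2)\<^sup>2) = r0 *\<^sub>R b"
    using ncvec_square[of r0] assms(1,3) \<open>0 < D\<close>
    by (simp add: r0_def D_def b_def power_divide power_mult_distrib)
  have ncvec1: "ncvec (sigma1\<^sup>2 * a\<^sup>2 / (sigma1\<^sup>2 - sigma0\<^sup>2)\<^sup>2) = r1 *\<^sub>R b"
    using ncvec_square[of r1] \<open>0 < sigma1\<close> assms(3) \<open>0 < D\<close>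
    by (simp add: r1_def D_def b_def power_divide power_mult_distrib)
  have shift: "r0 * (sigma1\<^sup>2 - sigma0\<^sup>2) = sigma0 * a"
    using \<open>0 < D\<close> by (simp add: r0_def D_def field_simps)
  have centres: "a + sigma0 * r0 = sigma1 * r1"
    using \<open>0 < D\<close> by (simp add: r0_def r1_def D_def field_simps power2_eq_square)
  define B where "B = {w :: real ^ 'n. (norm (w + r0 *\<^sub>R b))\<^sup>2 \<le> q}"
  define H where "H = {w :: real ^ 'n. w \<bullet> b \<in> {c<..}}"
  have [measurable]: "B \<in> sets borel" by (simp add: B_def)
  have np: "measure std_gauss {z. (1 / sigma0) *\<^sub>R (a *\<^sub>R b + sigma1 *\<^sub>R z) \<in> H}
      \<le> measure std_gauss {z. (1 / sigma0) *\<^sub>R (a *\<^sub>R b + sigma1 *\<^sub>R z) \<in> UNIV - B}"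
  proof (rule std_gauss_affine_neyman_pearson[where q = q, OF assms(1) \<open>0 < sigma1\<close> b(1) shift])
    show "measure std_gauss H \<le> measure std_gauss (UNIV - B)"
      using assms(4) measure_std_gauss_inner_Basis[OF b(2), of "{c<..}"] prob_compl[of B]
      by (simp add: B_def H_def nchi2_cdf_def ncvec0 Compl_eq_Diff_UNIV)
  qed (use \<open>0 < D\<close> in \<open>auto simp: B_def H_def D_def intro: mult_nonneg_nonneg mult_nonneg_nonpos\<close>)
  have preimage_H: "{z. (1 / sigma0) *\<^sub>R (a *\<^sub>R b + sigma1 *\<^sub>R z) \<in> H}
      = {z. z \<bullet> b \<in> {(sigma0 * c - a) / sigma1 <..}}"
  proof -
    have "c < (a + sigma1 * u) / sigma0 \<longleftrightarrow> (sigma0 * c - a) / sigma1 < u" for u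
      using assms(1) \<open>0 < sigma1\<close> by (simp add: field_simps)
    then show ?thesis by (simp only: H_def mem_Collect_eq greaterThan_iff inner_affine_unit[OF b(1)])
  qed
  have preimage_B: "{z. (1 / sigma0) *\<^sub>R (a *\<^sub>R b + sigma1 *\<^sub>R z) \<in> UNIV - B}
      = UNIV - {z. (norm (z + ncvec (sigma1\<^sup>2 * a\<^sup>2 / (sigma1\<^sup>2 - sigma0\<^sup>2)\<^sup>2)))\<^sup>2 \<le> sigma0\<^sup>2 / sigma1\<^sup>2 * q}"
    by (auto simp only: B_def ncvec1 mem_Collect_eq Diff_iff UNIV_I
        norm_affine_shift_le_iff[OF assms(1) \<open>0 < sigma1\<close> centres])
  show ?thesis
    using np prob_compl[of "{z. (norm (z + ncvec (sigma1\<^sup>2 * a\<^sup>2 / (sigma1\<^sup>2 - sigma0\<^sup>2)\<^sup>2)))\<^sup>2 \<le> sigma0\<^sup>2 / sigma1\<^sup>2 * q}"]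
    unfolding preimage_H preimage_B measure_std_gauss_inner_Basis[OF b(2) greaterThan_borel]
    by (simp add: nchi2_cdf_def Compl_eq_Diff_UNIV)
qed

section \<open>The certified radius\<close>

lemma certified_radius_of_xi_gt:
  fixes N :: "'n::finite itself"
  assumes "0 < pA" "pA < 1" "0 \<le> a" "0 < sigma1" "sigma1 < sigma0"
    and "xi_gt N sigma0 pA a sigma1 \<le> 1/2"
  shows "a \<le> sigma0 * Phi_inv pA"
proof -
  let ?q = "nchi2_qf N (sigma0\<^sup>2 * a\<^sup>2 / (sigma0\<^sup>2 - sigma1\<^sup>2)\<^sup>2) (1 - pA)"
  have "measure std_normal_measure {..< - Phi_inv pA}
      \<le> nchi2_cdf N (sigma0\<^sup>2 * a\<^sup>2 / (sigma0\<^sup>2 - sigma1\<^sup>2)\<^sup>2) ?q"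
    using assms(1,2) by (intro order_trans[OF measure_std_normal_lessThan_minus_Phi_inv nchi2_cdf_qf_ge]) auto
  then have "measure std_normal_measure {..< (sigma0 * - Phi_inv pA + a) / sigma1} \<le> 1/2"
    using neyman_pearson_ball_halfspace[OF assms(4,5,3)] assms(6) unfolding xi_gt_def by force
  then have "\<not> 0 < (sigma0 * - Phi_inv pA + a) / sigma1"
    using measure_std_normal_lessThan_gt_half by force
  with assms(4) show ?thesis by (simp add: field_simps)
qed

lemma certified_radius_of_xi_lt:
  fixes N :: "'n::finite itself"
  assumes "0 < sigma0" "0 < pA" "pA < 1" "0 \<le> a" "sigma0 < sigma1"
    and "xi_lt N sigma0 pA a sigma1 \<le> 1/2"
  shows "a \<le> sigma0 * Phi_inv pA"
proof -
  let ?q = "nchi2_qf N (sigma0\<^sup>2 * a\<^sup>2 / (sigma1\<^sup>2 - sigma0\<^sup>2)\<^sup>2) pA"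
  have "measure std_normal_measure {Phi_inv pA <..}
      \<le> 1 - nchi2_cdf N (sigma0\<^sup>2 * a\<^sup>2 / (sigma1\<^sup>2 - sigma0\<^sup>2)\<^sup>2) ?q"
    using assms(2,3) by (intro order_trans[OF measure_std_normal_greaterThan_Phi_inv] diff_left_mono nchi2_cdf_qf_le)
  then have "measure std_normal_measure {(sigma0 * Phi_inv pA - a) / sigma1 <..} \<le> 1/2"
    using neyman_pearson_ball_complement_halfspace[OF assms(1,5,4)] assms(6) unfolding xi_lt_def by force
  then have "\<not> (sigma0 * Phi_inv pA - a) / sigma1 < 0"
    using measure_std_normal_greaterThan_gt_half by force
  with assms(1,5) show ?thesis by (simp add: field_simps)
qed

theorem mainTheorem8:
  fixes N :: "'n::finite itself"
    and sigma0 pA a :: real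
  assumes "sigma0 > 0" and "0 < pA" and "pA < 1" and "a \<ge> 0"
  shows "(\<forall>sigma1. 0 < sigma1 \<and> sigma1 < sigma0 \<and> xi_gt N sigma0 pA a sigma1 \<le> 1/2
            \<longrightarrow> a \<le> sigma0 * Phi_inv pA)
       \<and> (\<forall>sigma1. sigma1 > sigma0 \<and> xi_lt N sigma0 pA a sigma1 \<le> 1/2
            \<longrightarrow> a \<le> sigma0 * Phi_inv pA)"
  using certified_radius_of_xi_gt[OF assms(2-4)] certified_radius_of_xi_lt[OF assms] by blast

end
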